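(* Let $m\ge 4$ be an integer, and let $H_m$ be the group defined below. Then: (i) $C_{H_m}((x_1,0)) = \langle (x_1,0),(x_2,0),(0,w) \mid w\in W_m\rangle$ and $C_{H_m}((x_m,0)) = \langle (x_m,0),(x_{m-1},0),(0,w)\mid w\in W_m\rangle$; (ii) $[H_m,H_m]=Z(H_m)=\{(0,w)\in H_m \mid w\in W_m\}$, and this group has order $2^{m-2}$; (iii) $X=\{(v,0)\in H_m\mid v\in V_m\}$ is a transversal to $Z(H_m)$ in $H_m$; (iv) $\langle (x_1,0),\dots,(x_{m-1},0)\rangle \cong H_{m-1}$.
   Context: For an integer $m\ge 3$, let $V_m$ and $W_m$ be vector spaces over $\mathrm{GF}(2)$ of dimensions $m$ and $m-2$, with ordered bases $x_1,\dots,x_m$ and $y_1,\dots,y_{m-2}$ respectively. Let $f_m:V_m\times V_m\to W_m$ be the bilinear map determined on basis vectors by $f_m(x_i,x_j)=0$ if $j\in\{i,i+1\}$, $f_m(x_i,x_j)=y_{j-i-1}$ if $i+2\le j\le m$, and $f_m(x_i,x_j)=0$ if $i>j$. The group $H_m$ has underlying set $V_m\times W_m$ with multiplication $(a,b)\cdot(c,d)=(a+c,\ f_m(a,c)+b+d)$; its identity is $(0,0)$. *)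

theory Defs
  imports "HOL-Algebra.Algebra"
begin

text \<open>Vectors of V_m (resp. W_m) over GF(2) are represented by their support w.r.t. the
  ordered basis x_1..x_m (resp. y_1..y_{m-2}): a subset of {1..m} (resp. {1..m-2}).\<close>

definition vadd :: "nat set \<Rightarrow> nat set \<Rightarrow> nat set" where
  "vadd A B = (A - B) \<union> (B - A)"

text \<open>The bilinear map f_m, extended bilinearly from the basis values:
  the coefficient of y_k in f_m(a,c) is the parity of the number of pairs (i,j) with
  x_i in a, x_j in c, i+2 \<le> j, and j-i-1 = k.\<close>

definition fm :: "nat \<Rightarrow> nat set \<Rightarrow> nat set \<Rightarrow> nat set" where
  "fm m a c = {k \<in> {1..m-2}.
      odd (card {(i,j). i \<in> a \<and> j \<in> c \<and> i + 2 \<le> j \<and> j - i - 1 = k})}"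

definition Hmult :: "nat \<Rightarrow> nat set \<times> nat set \<Rightarrow> nat set \<times> nat set \<Rightarrow> nat set \<times> nat set" where
  "Hmult m p q = (vadd (fst p) (fst q), vadd (vadd (fm m (fst p) (fst q)) (snd p)) (snd q))"

definition Hgrp :: "nat \<Rightarrow> (nat set \<times> nat set) monoid" where
  "Hgrp m = \<lparr>carrier = {p. fst p \<subseteq> {1..m} \<and> snd p \<subseteq> {1..m-2}},
             monoid.mult = Hmult m,
             monoid.one = ({}, {})\<rparr>"

definition centralizer :: "('a, 'b) monoid_scheme \<Rightarrow> 'a \<Rightarrow> 'a set" where
  "centralizer G g = {h \<in> carrier G. h \<otimes>\<^bsub>G\<^esub> g = g \<otimes>\<^bsub>G\<^esub> h}"

definition center :: "('a, 'b) monoid_scheme \<Rightarrow> 'a set" where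
  "center G = {z \<in> carrier G. \<forall>h \<in> carrier G. z \<otimes>\<^bsub>G\<^esub> h = h \<otimes>\<^bsub>G\<^esub> z}"

definition transversal :: "('a, 'b) monoid_scheme \<Rightarrow> 'a set \<Rightarrow> 'a set \<Rightarrow> bool" where
  "transversal G N T \<longleftrightarrow> T \<subseteq> carrier G \<and>
     (\<forall>C \<in> RCOSETS G N. \<exists>!x. x \<in> T \<and> x \<in> C)"

end

theory Submission imports Defs begin

text \<open>In coordinates
  \<open>(a,b)(c,d) = (a+c, f_m(a,c)+b+d)\<close>, so two elements commute iff \<open>f_m\<close> is symmetric on
  their first components, and every commutator lies in \<open>0 \<times> W_m\<close>; the commutator of
  \<open>x_i\<close> and \<open>x_j\<close> (\<open>i+2 \<le> j\<close>) is \<open>y_{j-i-1}\<close>, so the commutators span all of \<open>W_m\<close>.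
  Since \<open>f_m(x_i,x_1) = 0\<close> while \<open>f_m(x_1,x_j) = y_{j-2}\<close>, the centralizer of \<open>x_1\<close>
  consists of the elements whose \<open>V_m\<close>-part lies in \<open>\<langle>x_1,x_2\<rangle>\<close>, and symmetrically for
  \<open>x_m\<close>; intersecting both shows the centre is \<open>0 \<times> W_m\<close>. Finally \<open>f_m\<close> restricted to
  \<open>\<langle>x_1,\<dots>,x_{m-1}\<rangle>\<close> only takes values in \<open>\<langle>y_1,\<dots>,y_{m-3}\<rangle>\<close>, where it agrees with
  \<open>f_{m-1}\<close>.\<close>

lemma vadd_iff [simp]: "x \<in> vadd A B \<longleftrightarrow> (x \<in> A) \<noteq> (x \<in> B)"
  unfolding vadd_def by auto

lemma vadd_empty_left [simp]: "vadd {} A = A"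
  and vadd_empty_right [simp]: "vadd A {} = A"
  and vadd_self [simp]: "vadd A A = {}"
  by auto

lemma odd_card_vadd:
  assumes "finite A" "finite B"
  shows "odd (card (vadd A B)) \<longleftrightarrow> odd (card A) \<noteq> odd (card B)"
proof -
  have "vadd A B = (A \<union> B) - (A \<inter> B)" by auto
  then have "card (vadd A B) = card (A \<union> B) - card (A \<inter> B)"
    using assms by (simp only:) (intro card_Diff_subset, auto)
  moreover have "card (A \<inter> B) \<le> card (A \<union> B)"
    using assms by (intro card_mono) auto
  ultimately show ?thesis
    using card_Un_Int[OF assms] by presburger
qed

subsection \<open>The bilinear map\<close>

definition fm_witnesses :: "nat set \<Rightarrow> nat set \<Rightarrow> nat \<Rightarrow> nat set" where
  "fm_witnesses a c k = {i \<in> a. i + k + 1 \<in> c}"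

lemma fm_iff: "k \<in> fm m a c \<longleftrightarrow> k \<in> {1..m-2} \<and> odd (card (fm_witnesses a c k))"
proof -
  have "{(i,j). i \<in> a \<and> j \<in> c \<and> i + 2 \<le> j \<and> j - i - 1 = k} = (\<lambda>i. (i, i+k+1)) ` fm_witnesses a c k"
    if "k \<ge> 1"
    using that unfolding fm_witnesses_def by (auto simp: image_iff)
  moreover have "inj_on (\<lambda>i. (i, i+k+1)) S" for S
    by (auto simp: inj_on_def)
  ultimately show ?thesis
    unfolding fm_def by (auto simp: card_image)
qed

lemma fm_subset: "fm m a c \<subseteq> {1..m-2}"
  by (auto simp: fm_iff)

lemma fm_vadd_left:
  "finite a \<Longrightarrow> finite a' \<Longrightarrow> fm m (vadd a a') c = vadd (fm m a c) (fm m a' c)"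
proof -
  assume "finite a" "finite a'"
  moreover have "fm_witnesses (vadd a a') c k = vadd (fm_witnesses a c k) (fm_witnesses a' c k)" for k
    unfolding fm_witnesses_def by auto
  ultimately show ?thesis
    by (auto simp: fm_iff odd_card_vadd fm_witnesses_def)
qed

lemma fm_vadd_right:
  "finite a \<Longrightarrow> fm m a (vadd c c') = vadd (fm m a c) (fm m a c')"
proof -
  assume "finite a"
  moreover have "fm_witnesses a (vadd c c') k = vadd (fm_witnesses a c k) (fm_witnesses a c' k)" for k
    unfolding fm_witnesses_def by auto
  ultimately show ?thesis
    by (auto simp: fm_iff odd_card_vadd fm_witnesses_def)
qed

lemma fm_empty_left [simp]: "fm m {} c = {}"
  and fm_empty_right [simp]: "fm m a {} = {}"
  by (auto simp: fm_iff fm_witnesses_def)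

lemma fm_singleton_singleton:
  "fm m {i} {j} = (if i + 2 \<le> j \<and> j - i - 1 \<le> m - 2 then {j - i - 1} else {})"
proof -
  have "fm_witnesses {i} {j} k = (if i + k + 1 = j then {i} else {})" for k
    unfolding fm_witnesses_def by auto
  then show ?thesis
    by (auto simp: fm_iff split: if_splits)
qed

lemma fm_subset_atLeastAtMost:
  assumes "a \<subseteq> {1..}" "c \<subseteq> {..n}"
  shows "fm m a c \<subseteq> {1..n-2}"
proof
  fix k assume k: "k \<in> fm m a c"
  then have "fm_witnesses a c k \<noteq> {}"
    by (auto simp: fm_iff)
  then obtain i where "i \<in> a" "i + k + 1 \<in> c"
    unfolding fm_witnesses_def by auto
  with assms k show "k \<in> {1..n-2}"
    by (force simp: fm_iff)
qed

lemma fm_eq_of_le: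
  assumes "a \<subseteq> {1..n}" "c \<subseteq> {1..n}" "n \<le> m"
  shows "fm m a c = fm n a c"
proof -
  have "fm m a c \<subseteq> {1..n-2}"
    using assms by (intro fm_subset_atLeastAtMost) auto
  then show ?thesis
    using assms(3) unfolding set_eq_iff subset_iff fm_iff by auto
qed

subsection \<open>The group \<open>H_m\<close>\<close>

lemma carrier_Hgrp: "carrier (Hgrp m) = Pow {1..m} \<times> Pow {1..m-2}"
  by (auto simp: Hgrp_def)

lemma Hgrp_mult [simp]:
  "(a,b) \<otimes>\<^bsub>Hgrp m\<^esub> (c,d) = (vadd a c, vadd (vadd (fm m a c) b) d)"
  by (simp add: Hgrp_def Hmult_def)

lemma Hgrp_one [simp]: "\<one>\<^bsub>Hgrp m\<^esub> = ({}, {})"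
  by (simp add: Hgrp_def)

lemma group_Hgrp: "group (Hgrp m)"
proof (rule groupI)
  fix x y assume "x \<in> carrier (Hgrp m)" "y \<in> carrier (Hgrp m)"
  then show "x \<otimes>\<^bsub>Hgrp m\<^esub> y \<in> carrier (Hgrp m)"
    using fm_subset[of m] by (cases x; cases y) (auto simp: carrier_Hgrp subset_iff)
next
  fix x y z assume "x \<in> carrier (Hgrp m)" "y \<in> carrier (Hgrp m)" "z \<in> carrier (Hgrp m)"
  then obtain a b c d e g where xyz: "x = (a,b)" "y = (c,d)" "z = (e,g)"
    and "a \<subseteq> {1..m}" "c \<subseteq> {1..m}"
    by (auto simp: carrier_Hgrp)
  then have "finite a" "finite c" "finite (vadd a c)"
    by (auto intro: finite_subset simp: vadd_def)
  then show "x \<otimes>\<^bsub>Hgrp m\<^esub> y \<otimes>\<^bsub>Hgrp m\<^esub> z = x \<otimes>\<^bsub>Hgrp m\<^esub> (y \<otimes>\<^bsub>Hgrp m\<^esub> z)"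
    unfolding xyz by (simp add: fm_vadd_left fm_vadd_right set_eq_iff) blast
next
  fix x assume "x \<in> carrier (Hgrp m)"
  then obtain a b where x: "x = (a,b)" "a \<subseteq> {1..m}" "b \<subseteq> {1..m-2}"
    by (auto simp: carrier_Hgrp)
  show "\<exists>y\<in>carrier (Hgrp m). y \<otimes>\<^bsub>Hgrp m\<^esub> x = \<one>\<^bsub>Hgrp m\<^esub>"
  proof
    show "(a, vadd b (fm m a a)) \<otimes>\<^bsub>Hgrp m\<^esub> x = \<one>\<^bsub>Hgrp m\<^esub>"
      using x(1) by (auto simp: set_eq_iff)
    show "(a, vadd b (fm m a a)) \<in> carrier (Hgrp m)"
      using x fm_subset[of m] by (auto simp: carrier_Hgrp subset_iff)
  qed
qed (auto simp: carrier_Hgrp)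

lemma Hgrp_inv:
  assumes "(a,b) \<in> carrier (Hgrp m)"
  shows "inv\<^bsub>Hgrp m\<^esub> (a,b) = (a, vadd b (fm m a a))"
proof -
  interpret group "Hgrp m" by (rule group_Hgrp)
  show ?thesis
  proof (rule inv_equality)
    show "(a, vadd b (fm m a a)) \<otimes>\<^bsub>Hgrp m\<^esub> (a, b) = \<one>\<^bsub>Hgrp m\<^esub>"
      by (auto simp: set_eq_iff)
    show "(a, vadd b (fm m a a)) \<in> carrier (Hgrp m)"
      using assms fm_subset[of m] by (auto simp: carrier_Hgrp subset_iff)
  qed (use assms in simp)
qed

lemma Hgrp_commute_iff:
  "(a,b) \<otimes>\<^bsub>Hgrp m\<^esub> (c,d) = (c,d) \<otimes>\<^bsub>Hgrp m\<^esub> (a,b) \<longleftrightarrow> fm m a c = fm m c a"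
  by (auto simp: set_eq_iff)

lemma fst_Hgrp_commutator:
  assumes "p \<in> carrier (Hgrp m)" "q \<in> carrier (Hgrp m)"
  shows "fst (p \<otimes>\<^bsub>Hgrp m\<^esub> q \<otimes>\<^bsub>Hgrp m\<^esub> inv\<^bsub>Hgrp m\<^esub> p \<otimes>\<^bsub>Hgrp m\<^esub> inv\<^bsub>Hgrp m\<^esub> q) = {}"
  using assms by (cases p; cases q) (auto simp: Hgrp_inv)

lemma Hgrp_commutator_basis:
  assumes "i \<in> {1..m}" "j \<in> {1..m}" "i + 2 \<le> j"
  shows "({i},{}) \<otimes>\<^bsub>Hgrp m\<^esub> ({j},{}) \<otimes>\<^bsub>Hgrp m\<^esub> inv\<^bsub>Hgrp m\<^esub> ({i},{}) \<otimes>\<^bsub>Hgrp m\<^esub> inv\<^bsub>Hgrp m\<^esub> ({j},{})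
         = ({}, {j - i - 1})"
proof -
  have inv: "inv\<^bsub>Hgrp m\<^esub> ({l},{}) = ({l},{})" if "l \<in> {1..m}" for l
    using that by (simp add: Hgrp_inv carrier_Hgrp fm_singleton_singleton)
  have "vadd (vadd {i} {j}) {i} = {j}"
    using assms by auto
  then show ?thesis
    using assms by (simp add: inv fm_vadd_left fm_singleton_singleton)
qed

subsection \<open>Subgroups with a prescribed support\<close>

lemma subgroup_Pow_times:
  assumes "A \<subseteq> {1..m}" "B \<subseteq> {1..m-2}"
    and fm_closed: "\<And>a c. a \<subseteq> A \<Longrightarrow> c \<subseteq> A \<Longrightarrow> fm m a c \<subseteq> B"
  shows "subgroup (Pow A \<times> Pow B) (Hgrp m)"
proof
  show "Pow A \<times> Pow B \<subseteq> carrier (Hgrp m)"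
    using assms(1,2) by (auto simp: carrier_Hgrp)
  show "\<one>\<^bsub>Hgrp m\<^esub> \<in> Pow A \<times> Pow B"
    by simp
  fix p q assume p: "p \<in> Pow A \<times> Pow B" and q: "q \<in> Pow A \<times> Pow B"
  then show "p \<otimes>\<^bsub>Hgrp m\<^esub> q \<in> Pow A \<times> Pow B"
    using fm_closed[of "fst p" "fst q"] by (cases p; cases q) auto
  have "p \<in> carrier (Hgrp m)"
    using p assms(1,2) by (auto simp: carrier_Hgrp)
  then show "inv\<^bsub>Hgrp m\<^esub> p \<in> Pow A \<times> Pow B"
    using p fm_closed[of "fst p" "fst p"] by (cases p) (auto simp: Hgrp_inv)
qed

lemma Pow_times_subset_subgroup:
  assumes H: "subgroup H (Hgrp m)" and "finite A" "finite B"
    and basis: "\<And>i. i \<in> A \<Longrightarrow> ({i},{}) \<in> H"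
    and centre: "\<And>k. k \<in> B \<Longrightarrow> ({},{k}) \<in> H"
    and fm_closed: "\<And>i a. i \<in> A \<Longrightarrow> a \<subseteq> A \<Longrightarrow> fm m {i} a \<subseteq> B"
  shows "Pow A \<times> Pow B \<subseteq> H"
proof clarify
  fix a b assume a: "a \<subseteq> A" and b: "b \<subseteq> B"
  have central: "({},w) \<in> H" if "w \<subseteq> B" for w
    using finite_subset[OF that \<open>finite B\<close>] that
  proof (induction rule: finite_subset_induct)
    case empty
    show ?case using subgroup.one_closed[OF H] by simp
  next
    case (insert k w)
    then have "({},{k}) \<otimes>\<^bsub>Hgrp m\<^esub> ({},w) \<in> H"
      by (intro subgroup.m_closed[OF H] centre)
    moreover have "({},{k}) \<otimes>\<^bsub>Hgrp m\<^esub> ({},w) = ({}, insert k w)"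
      using insert by auto
    ultimately show ?case
      by simp
  qed
  have "(a,{}) \<in> H"
    using finite_subset[OF a \<open>finite A\<close>] a
  proof (induction rule: finite_subset_induct')
    case empty
    show ?case using subgroup.one_closed[OF H] by simp
  next
    case (insert i a)
    \<comment> \<open>the correction term \<open>(0, f_m(x_i, a))\<close> cancels the cross term of \<open>x_i \<cdot> a\<close>\<close>
    have "({i},{}) \<otimes>\<^bsub>Hgrp m\<^esub> (a,{}) \<otimes>\<^bsub>Hgrp m\<^esub> ({}, fm m {i} a) \<in> H"
      using insert basis central fm_closed by (intro subgroup.m_closed[OF H]) auto
    moreover have "({i},{}) \<otimes>\<^bsub>Hgrp m\<^esub> (a,{}) \<otimes>\<^bsub>Hgrp m\<^esub> ({}, fm m {i} a) = (insert i a, {})"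
      using insert by (auto simp: set_eq_iff)
    ultimately show ?case by simp
  qed
  then have "(a,{}) \<otimes>\<^bsub>Hgrp m\<^esub> ({},b) \<in> H"
    using b central by (intro subgroup.m_closed[OF H])
  then show "(a,b) \<in> H"
    by simp
qed

lemma generate_Hgrp_eq_Pow_times:
  assumes A: "A \<subseteq> {1..m}" and B: "B \<subseteq> {1..m-2}"
    and fm_closed: "\<And>a c. a \<subseteq> A \<Longrightarrow> c \<subseteq> A \<Longrightarrow> fm m a c \<subseteq> B"
    and T: "T \<subseteq> Pow A \<times> Pow B"
    and basis: "\<And>i. i \<in> A \<Longrightarrow> ({i},{}) \<in> generate (Hgrp m) T"
    and centre: "\<And>k. k \<in> B \<Longrightarrow> ({},{k}) \<in> generate (Hgrp m) T"
  shows "generate (Hgrp m) T = Pow A \<times> Pow B"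
proof
  interpret group "Hgrp m" by (rule group_Hgrp)
  have sub: "subgroup (Pow A \<times> Pow B) (Hgrp m)"
    using A B fm_closed by (rule subgroup_Pow_times)
  then show "generate (Hgrp m) T \<subseteq> Pow A \<times> Pow B"
    using T by (intro generate_subgroup_incl)
  have "T \<subseteq> carrier (Hgrp m)"
    using T subgroup.subset[OF sub] by blast
  then show "Pow A \<times> Pow B \<subseteq> generate (Hgrp m) T"
    using A B fm_closed basis centre
    by (intro Pow_times_subset_subgroup[where m = m] generate_is_subgroup) (auto intro: finite_subset)
qed

subsection \<open>Centralizers of the extreme basis vectors and the centre\<close>

lemma centralizer_Hgrp:
  "centralizer (Hgrp m) (g,h) = {p \<in> carrier (Hgrp m). fm m (fst p) g = fm m g (fst p)}"
proof -
  have "p \<otimes>\<^bsub>Hgrp m\<^esub> (g,h) = (g,h) \<otimes>\<^bsub>Hgrp m\<^esub> p \<longleftrightarrow> fm m (fst p) g = fm m g (fst p)" for p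
    by (cases p) (simp only: Hgrp_commute_iff fst_conv)
  then show ?thesis
    unfolding centralizer_def by blast
qed

lemma fm_commute_first_iff:
  assumes "a \<subseteq> {1..m}"
  shows "fm m a {1} = fm m {1} a \<longleftrightarrow> a \<subseteq> {1,2}"
proof -
  have "fm m a {1} = {}"
    by (auto simp: fm_iff fm_witnesses_def)
  moreover have "fm_witnesses {1} a k = (if k + 2 \<in> a then {1} else {})" for k
    by (auto simp: fm_witnesses_def)
  then have "fm m {1} a = {k \<in> {1..m-2}. k + 2 \<in> a}"
    by (auto simp: fm_iff split: if_splits)
  moreover have "{k \<in> {1..m-2}. k + 2 \<in> a} = {} \<longleftrightarrow> a \<subseteq> {1,2}"
  proof
    assume empty: "{k \<in> {1..m-2}. k + 2 \<in> a} = {}"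
    show "a \<subseteq> {1,2}"
    proof
      fix i assume i: "i \<in> a"
      show "i \<in> {1,2}"
      proof (rule ccontr)
        assume "i \<notin> {1,2}"
        moreover have "1 \<le> i" "i \<le> m"
          using i assms by auto
        ultimately have "i - 2 \<in> {1..m-2}" "i - 2 + 2 = i"
          by auto
        with i empty show False
          by (metis (no_types, lifting) empty_iff mem_Collect_eq)
      qed
    qed
  qed auto
  ultimately show ?thesis
    by simp
qed

lemma fm_commute_last_iff:
  assumes "a \<subseteq> {1..m}"
  shows "fm m a {m} = fm m {m} a \<longleftrightarrow> a \<subseteq> {m-1,m}"
proof -
  have "fm_witnesses {m} a k = {}" for k
    using assms by (auto simp: fm_witnesses_def)
  then have "fm m {m} a = {}"
    by (auto simp: fm_iff)
  moreover have "fm_witnesses a {m} k = (if m - k - 1 \<in> a then {m - k - 1} else {})"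
    if "k \<in> {1..m-2}" for k
    using that by (auto simp: fm_witnesses_def)
  then have "fm m a {m} = {k \<in> {1..m-2}. m - k - 1 \<in> a}"
    by (auto simp: fm_iff split: if_splits)
  moreover have "{k \<in> {1..m-2}. m - k - 1 \<in> a} = {} \<longleftrightarrow> a \<subseteq> {m-1,m}"
  proof
    assume empty: "{k \<in> {1..m-2}. m - k - 1 \<in> a} = {}"
    show "a \<subseteq> {m-1,m}"
    proof
      fix i assume i: "i \<in> a"
      show "i \<in> {m-1,m}"
      proof (rule ccontr)
        assume "i \<notin> {m-1,m}"
        moreover have "1 \<le> i" "i \<le> m"
          using i assms by auto
        ultimately have "m - 1 - i \<in> {1..m-2}" "m - (m - 1 - i) - 1 = i"
          by auto
        with i empty show False
          by (metis (no_types, lifting) empty_iff mem_Collect_eq)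
      qed
    qed
  qed auto
  ultimately show ?thesis
    by simp
qed

lemma centralizer_first:
  "centralizer (Hgrp m) ({1},{}) = Pow ({1..m} \<inter> {1,2}) \<times> Pow {1..m-2}"
proof (rule Set.set_eqI)
  fix p :: "nat set \<times> nat set"
  show "p \<in> centralizer (Hgrp m) ({1},{}) \<longleftrightarrow> p \<in> Pow ({1..m} \<inter> {1,2}) \<times> Pow {1..m-2}"
    using fm_commute_first_iff[of "fst p" m] by (auto simp: centralizer_Hgrp carrier_Hgrp)
qed

lemma centralizer_last:
  "centralizer (Hgrp m) ({m},{}) = Pow ({1..m} \<inter> {m-1,m}) \<times> Pow {1..m-2}"
proof (rule Set.set_eqI)
  fix p :: "nat set \<times> nat set"
  show "p \<in> centralizer (Hgrp m) ({m},{}) \<longleftrightarrow> p \<in> Pow ({1..m} \<inter> {m-1,m}) \<times> Pow {1..m-2}"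
    using fm_commute_last_iff[of "fst p" m] by (auto simp: centralizer_Hgrp carrier_Hgrp)
qed

lemma generate_basis_and_centre:
  assumes "A \<subseteq> {1..m}"
  shows "generate (Hgrp m) ((\<lambda>i. ({i},{})) ` A \<union> {{}} \<times> Pow {1..m-2}) = Pow A \<times> Pow {1..m-2}"
  using assms fm_subset[of m]
  by (intro generate_Hgrp_eq_Pow_times) (auto intro: generate.incl)

lemma centre_Hgrp:
  assumes "4 \<le> m"
  shows "center (Hgrp m) = {{}} \<times> Pow {1..m-2}"
proof
  have "center (Hgrp m) \<subseteq> centralizer (Hgrp m) ({1},{}) \<inter> centralizer (Hgrp m) ({m},{})"
    using assms unfolding center_def centralizer_def by (auto simp: carrier_Hgrp)
  also have "\<dots> \<subseteq> Pow ({1,2} \<inter> {m-1,m}) \<times> Pow {1..m-2}"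
    unfolding centralizer_first centralizer_last by auto
  also have "{1,2} \<inter> {m-1,m} = {}"
    using assms by auto
  finally show "center (Hgrp m) \<subseteq> {{}} \<times> Pow {1..m-2}"
    by simp
  show "{{}} \<times> Pow {1..m-2} \<subseteq> center (Hgrp m)"
    unfolding center_def by (auto simp: carrier_Hgrp set_eq_iff)
qed

subsection \<open>Commutator subgroup, transversal and the subgroup \<open>H_{m-1}\<close>\<close>

lemma derived_Hgrp: "derived (Hgrp m) (carrier (Hgrp m)) = {{}} \<times> Pow {1..m-2}"
proof -
  interpret group "Hgrp m" by (rule group_Hgrp)
  have "generate (Hgrp m) (derived_set (Hgrp m) (carrier (Hgrp m))) = Pow {} \<times> Pow {1..m-2}"
  proof (rule generate_Hgrp_eq_Pow_times)
    show "derived_set (Hgrp m) (carrier (Hgrp m)) \<subseteq> Pow {} \<times> Pow {1..m-2}"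
    proof
      fix x assume "x \<in> derived_set (Hgrp m) (carrier (Hgrp m))"
      then obtain p q where pq: "p \<in> carrier (Hgrp m)" "q \<in> carrier (Hgrp m)"
        and x: "x = p \<otimes>\<^bsub>Hgrp m\<^esub> q \<otimes>\<^bsub>Hgrp m\<^esub> inv\<^bsub>Hgrp m\<^esub> p \<otimes>\<^bsub>Hgrp m\<^esub> inv\<^bsub>Hgrp m\<^esub> q"
        by blast
      then have "x \<in> carrier (Hgrp m)"
        by simp
      moreover have "fst x = {}"
        unfolding x by (rule fst_Hgrp_commutator[OF pq])
      ultimately show "x \<in> Pow {} \<times> Pow {1..m-2}"
        by (auto simp: carrier_Hgrp)
    qed
    fix k assume "k \<in> {1..m-2}"
    then have "1 \<in> {1..m}" "k + 2 \<in> {1..m}" "1 + 2 \<le> k + 2"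
      by auto
    then have "({1},{}) \<otimes>\<^bsub>Hgrp m\<^esub> ({k+2},{}) \<otimes>\<^bsub>Hgrp m\<^esub> inv\<^bsub>Hgrp m\<^esub> ({1},{})
        \<otimes>\<^bsub>Hgrp m\<^esub> inv\<^bsub>Hgrp m\<^esub> ({k+2},{}) = ({},{k})"
      "({1},{}) \<in> carrier (Hgrp m)" "({k+2},{}) \<in> carrier (Hgrp m)"
      using Hgrp_commutator_basis[of 1 m "k+2"] by (simp_all add: carrier_Hgrp)
    then have "({}, {k}) \<in> derived_set (Hgrp m) (carrier (Hgrp m))"
      by blast
    then show "({}, {k}) \<in> generate (Hgrp m) (derived_set (Hgrp m) (carrier (Hgrp m)))"
      by (rule generate.incl)
  qed auto
  then show ?thesis
    by (simp add: derived_def)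
qed

lemma r_coset_centre:
  assumes "(a,b) \<in> carrier (Hgrp m)"
  shows "({{}} \<times> Pow {1..m-2}) #>\<^bsub>Hgrp m\<^esub> (a,b) = {a} \<times> Pow {1..m-2}"
proof -
  have b: "b \<subseteq> {1..m-2}"
    using assms by (simp add: carrier_Hgrp)
  have "({{}} \<times> Pow {1..m-2}) #>\<^bsub>Hgrp m\<^esub> (a,b) = (\<lambda>w. (a, vadd w b)) ` Pow {1..m-2}"
    unfolding r_coset_def by auto
  also have "\<dots> = {a} \<times> Pow {1..m-2}"
  proof (intro equalityI subsetI)
    fix p assume "p \<in> {a} \<times> Pow {1..m-2}"
    then obtain v where "p = (a,v)" "v \<subseteq> {1..m-2}"
      by blast
    moreover have "v = vadd (vadd v b) b" "vadd v b \<subseteq> {1..m-2}"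
      using b \<open>v \<subseteq> {1..m-2}\<close> unfolding vadd_def by blast+
    ultimately show "p \<in> (\<lambda>w. (a, vadd w b)) ` Pow {1..m-2}"
      by blast
  qed (use b in \<open>auto simp: vadd_def\<close>)
  finally show ?thesis .
qed

lemma transversal_centre:
  "transversal (Hgrp m) ({{}} \<times> Pow {1..m-2}) (Pow {1..m} \<times> {{}})"
  unfolding transversal_def RCOSETS_def
proof (intro conjI ballI)
  show "Pow {1..m} \<times> {{}} \<subseteq> carrier (Hgrp m)"
    by (auto simp: carrier_Hgrp)
  fix C assume "C \<in> (\<Union>g\<in>carrier (Hgrp m). {({{}} \<times> Pow {1..m-2}) #>\<^bsub>Hgrp m\<^esub> g})"
  then obtain a b where ab: "(a,b) \<in> carrier (Hgrp m)"
    and "C = ({{}} \<times> Pow {1..m-2}) #>\<^bsub>Hgrp m\<^esub> (a,b)"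
    by auto
  then have C: "C = {a} \<times> Pow {1..m-2}"
    using r_coset_centre by metis
  have "(a,{}) \<in> Pow {1..m} \<times> {{}} \<and> (a,{}) \<in> C"
    using ab C by (auto simp: carrier_Hgrp)
  then show "\<exists>!x. x \<in> Pow {1..m} \<times> {{}} \<and> x \<in> C"
    unfolding C by (intro ex1I[of _ "(a,{})"]) auto
qed

lemma generate_initial_basis:
  assumes "n \<le> m"
  shows "generate (Hgrp m) ((\<lambda>i. ({i},{})) ` {1..n}) = carrier (Hgrp n)"
  unfolding carrier_Hgrp
proof (rule generate_Hgrp_eq_Pow_times)
  show "fm m a c \<subseteq> {1..n-2}" if "a \<subseteq> {1..n}" "c \<subseteq> {1..n}" for a c
    using that by (intro fm_subset_atLeastAtMost) auto
  fix k assume k: "k \<in> {1..n-2}"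
  interpret group "Hgrp m" by (rule group_Hgrp)
  have sub: "subgroup (generate (Hgrp m) ((\<lambda>i. ({i},{})) ` {1..n})) (Hgrp m)"
    using assms by (intro generate_is_subgroup) (auto simp: carrier_Hgrp)
  have "({1},{}) \<in> generate (Hgrp m) ((\<lambda>i. ({i},{})) ` {1..n})"
       "({k+2},{}) \<in> generate (Hgrp m) ((\<lambda>i. ({i},{})) ` {1..n})"
    using k by (force intro: generate.incl)+
  then have "({1},{}) \<otimes>\<^bsub>Hgrp m\<^esub> ({k+2},{}) \<otimes>\<^bsub>Hgrp m\<^esub> inv\<^bsub>Hgrp m\<^esub> ({1},{})
      \<otimes>\<^bsub>Hgrp m\<^esub> inv\<^bsub>Hgrp m\<^esub> ({k+2},{}) \<in> generate (Hgrp m) ((\<lambda>i. ({i},{})) ` {1..n})"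
    by (intro subgroup.m_closed[OF sub] subgroup.m_inv_closed[OF sub]) assumption+
  moreover have "({1},{}) \<otimes>\<^bsub>Hgrp m\<^esub> ({k+2},{}) \<otimes>\<^bsub>Hgrp m\<^esub> inv\<^bsub>Hgrp m\<^esub> ({1},{})
      \<otimes>\<^bsub>Hgrp m\<^esub> inv\<^bsub>Hgrp m\<^esub> ({k+2},{}) = ({},{k})"
  proof -
    have "1 \<in> {1..m}" "k + 2 \<in> {1..m}" "1 + 2 \<le> k + 2"
      using k assms by auto
    from Hgrp_commutator_basis[OF this] show ?thesis
      by simp
  qed
  ultimately show "({},{k}) \<in> generate (Hgrp m) ((\<lambda>i. ({i},{})) ` {1..n})"
    by simp
qed (use assms in \<open>auto intro: generate.incl\<close>)

lemma subgroup_generated_iso_Hgrp: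
  assumes "n \<le> m" and carrier_eq: "carrier (subgroup_generated (Hgrp m) S) = carrier (Hgrp n)"
  shows "subgroup_generated (Hgrp m) S \<cong> Hgrp n"
proof (rule is_isoI)
  have "p \<otimes>\<^bsub>Hgrp m\<^esub> q = p \<otimes>\<^bsub>Hgrp n\<^esub> q" if "p \<in> carrier (Hgrp n)" "q \<in> carrier (Hgrp n)" for p q
  proof -
    obtain a b c d where pq: "p = (a,b)" "q = (c,d)"
      by fastforce
    moreover have "a \<subseteq> {1..n}" "c \<subseteq> {1..n}"
      using that unfolding pq by (auto simp: carrier_Hgrp)
    ultimately show ?thesis
      using fm_eq_of_le[of a n c m] assms(1) by simp
  qed
  then show "id \<in> iso (subgroup_generated (Hgrp m) S) (Hgrp n)"
    by (intro isoI homI) (simp_all add: carrier_eq)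
qed

theorem lemma2p1:
  fixes m :: nat
  assumes "m \<ge> 4"
  shows "centralizer (Hgrp m) ({1}, {}) =
           generate (Hgrp m) ({({1}, {}), ({2}, {})} \<union> {({}, w) | w. w \<subseteq> {1..m-2}})
       \<and> centralizer (Hgrp m) ({m}, {}) =
           generate (Hgrp m) ({({m}, {}), ({m-1}, {})} \<union> {({}, w) | w. w \<subseteq> {1..m-2}})
       \<and> derived (Hgrp m) (carrier (Hgrp m)) = center (Hgrp m)
       \<and> center (Hgrp m) = {({}, w) | w. w \<subseteq> {1..m-2}}
       \<and> card (center (Hgrp m)) = 2 ^ (m - 2)
       \<and> transversal (Hgrp m) (center (Hgrp m)) {(v, {}) | v. v \<subseteq> {1..m}}
       \<and> subgroup_generated (Hgrp m) {({i}, {}) | i. i \<in> {1..m-1}} \<cong> Hgrp (m - 1)"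
proof -
  have set_builders: "{({}, w) | w. w \<subseteq> {1..m-2}} = {{}} \<times> Pow {1..m-2}"
    "{(v, {}) | v. v \<subseteq> {1..m}} = Pow {1..m} \<times> {{}}"
    "{({i}, {}) | i. i \<in> {1..m-1}} = (\<lambda>i. ({i},{})) ` {1..m-1}"
    by auto
  have "{1..m} \<inter> {1,2} = {1,2}" "{1..m} \<inter> {m-1,m} = {m-1,m}"
    using assms by auto
  then have "centralizer (Hgrp m) ({1}, {}) = generate (Hgrp m) ((\<lambda>i. ({i},{})) ` {1,2} \<union> {{}} \<times> Pow {1..m-2})"
    "centralizer (Hgrp m) ({m}, {}) = generate (Hgrp m) ((\<lambda>i. ({i},{})) ` {m-1,m} \<union> {{}} \<times> Pow {1..m-2})"
    unfolding centralizer_first centralizer_last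
    by (metis generate_basis_and_centre inf.cobounded1)+
  then have centralizers:
    "centralizer (Hgrp m) ({1}, {}) = generate (Hgrp m) ({({1}, {}), ({2}, {})} \<union> {{}} \<times> Pow {1..m-2})"
    "centralizer (Hgrp m) ({m}, {}) = generate (Hgrp m) ({({m}, {}), ({m-1}, {})} \<union> {{}} \<times> Pow {1..m-2})"
    by (simp_all add: insert_commute)
  have "carrier (Hgrp m) \<inter> (\<lambda>i. ({i},{})) ` {1..m-1} = (\<lambda>i. ({i},{})) ` {1..m-1}"
    by (auto simp: carrier_Hgrp)
  then have "carrier (subgroup_generated (Hgrp m) ((\<lambda>i. ({i},{})) ` {1..m-1})) = carrier (Hgrp (m - 1))"
    unfolding carrier_subgroup_generated by (metis generate_initial_basis diff_le_self)
  then have "subgroup_generated (Hgrp m) ((\<lambda>i. ({i},{})) ` {1..m-1}) \<cong> Hgrp (m - 1)"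
    by (intro subgroup_generated_iso_Hgrp) simp_all
  then show ?thesis
    unfolding set_builders centralizers
    using centre_Hgrp[OF assms] derived_Hgrp transversal_centre by (simp add: card_cartesian_product card_Pow)
qed

end
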